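(* Let $U=\mathbb{C}^m$, $V=\mathbb{C}^2$, $W=\mathbb{C}^2$ with bases $\{u_i\}$, $\{v_j\}$, $\{w_k\}$ and dual bases $\{u^i\}$, $\{v^j\}$, $\{w^k\}$, and set $x^i_j=u^i\otimes v_j\in U^*\otimes V$, $y^j_k=v^j\otimes w_k\in V^*\otimes W$, $z^k_i=w^k\otimes u_i\in W^*\otimes U$. Let $$M_{\langle m,2,2\rangle}=\sum_{k=1}^{2}\sum_{j=1}^{2}\sum_{i=1}^{m} x^i_j\otimes y^j_k\otimes z^k_i$$ and $$T_{BCLRS,m}=M_{\langle m,2,2\rangle}-x^1_1\otimes(y^1_1\otimes z^1_1+y^1_2\otimes z^2_1)\in A\otimes B\otimes C,$$ where $A\subset U^*\otimes V$ is the $(2m-1)$-dimensional span of all $x^i_j$ with $(i,j)\neq(1,1)$, $B=V^*\otimes W\cong\mathbb{C}^4$ and $C=W^*\otimes U\cong\mathbb{C}^{2m}$. Then the border rank of $T_{BCLRS,2}$ equals $5$, and for every $m>2$ the border rank of $T_{BCLRS,m}$ is at least $3m-2$.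
   Context: A tensor in $A\otimes B\otimes C$ has rank one if it is of the form $a\otimes b\otimes c$ with $a,b,c$ nonzero. The border rank of a tensor $T$ is the smallest $r$ such that $T$ is a limit of tensors that are sums of at most $r$ rank one tensors. *)

theory Defs
  imports Complex_Main
begin

text \<open>Tensors in A (x) B (x) C are represented in coordinates: a tensor is a function
  giving the coefficient of each basis element (a,b,c), where basis indices of A, B, C
  range over finite carrier sets IA, IB, IC (coefficients outside are zero).\<close>

definition supported_in :: "'a set \<Rightarrow> ('a \<Rightarrow> complex) \<Rightarrow> bool" where
  "supported_in I v \<longleftrightarrow> (\<forall>x. x \<notin> I \<longrightarrow> v x = 0)"

definition tprod :: "('a \<Rightarrow> complex) \<Rightarrow> ('b \<Rightarrow> complex) \<Rightarrow> ('c \<Rightarrow> complex)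
    \<Rightarrow> ('a \<Rightarrow> 'b \<Rightarrow> 'c \<Rightarrow> complex)" where
  "tprod a b c = (\<lambda>x y z. a x * b y * c z)"

definition rank_one :: "'a set \<Rightarrow> 'b set \<Rightarrow> 'c set \<Rightarrow> ('a \<Rightarrow> 'b \<Rightarrow> 'c \<Rightarrow> complex) \<Rightarrow> bool" where
  "rank_one IA IB IC t \<longleftrightarrow>
     (\<exists>a b c. supported_in IA a \<and> supported_in IB b \<and> supported_in IC c \<and>
              a \<noteq> (\<lambda>_. 0) \<and> b \<noteq> (\<lambda>_. 0) \<and> c \<noteq> (\<lambda>_. 0) \<and> t = tprod a b c)"

definition sum_rank_le :: "'a set \<Rightarrow> 'b set \<Rightarrow> 'c set \<Rightarrow> nat \<Rightarrow> ('a \<Rightarrow> 'b \<Rightarrow> 'c \<Rightarrow> complex) \<Rightarrow> bool" where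
  "sum_rank_le IA IB IC r T \<longleftrightarrow>
     (\<exists>k ts. k \<le> r \<and> (\<forall>i<k. rank_one IA IB IC (ts i)) \<and>
             T = (\<lambda>x y z. \<Sum>i<k. ts i x y z))"

text \<open>Border rank: least r such that T is a limit (in the Euclidean topology of the
  finite-dimensional space, i.e. coordinatewise) of sums of at most r rank one tensors.\<close>
definition border_rank :: "'a set \<Rightarrow> 'b set \<Rightarrow> 'c set \<Rightarrow> ('a \<Rightarrow> 'b \<Rightarrow> 'c \<Rightarrow> complex) \<Rightarrow> nat" where
  "border_rank IA IB IC T = (LEAST r. \<exists>S :: nat \<Rightarrow> ('a \<Rightarrow> 'b \<Rightarrow> 'c \<Rightarrow> complex).
      (\<forall>n. sum_rank_le IA IB IC r (S n)) \<and>
      (\<forall>x y z. (\<lambda>n. S n x y z) \<longlonglongrightarrow> T x y z))"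

text \<open>Basis vectors; indices are 0-based. x^i_j = u^i (x) v_j is indexed by (i,j),
  y^j_k = v^j (x) w_k by (j,k), z^k_i = w^k (x) u_i by (k,i).\<close>
definition bvec :: "'a \<Rightarrow> 'a \<Rightarrow> complex" where
  "bvec p = (\<lambda>q. if q = p then 1 else 0)"

text \<open>A = span of x^i_j with (i,j) \<noteq> (1,1) (0-based: (0,0)).\<close>
definition IA :: "nat \<Rightarrow> (nat \<times> nat) set" where
  "IA m = {(i, j). i < m \<and> j < 2} - {(0, 0)}"

definition IB :: "(nat \<times> nat) set" where
  "IB = {(j, k). j < 2 \<and> k < 2}"

definition IC :: "nat \<Rightarrow> (nat \<times> nat) set" where
  "IC m = {(k, i). k < 2 \<and> i < m}"

definition matmult_tensor :: "nat \<Rightarrow> (nat \<times> nat) \<Rightarrow> (nat \<times> nat) \<Rightarrow> (nat \<times> nat) \<Rightarrow> complex" where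
  "matmult_tensor m = (\<lambda>x y z. \<Sum>k<2. \<Sum>j<2. \<Sum>i<m.
       tprod (bvec (i, j)) (bvec (j, k)) (bvec (k, i)) x y z)"

definition T_BCLRS :: "nat \<Rightarrow> (nat \<times> nat) \<Rightarrow> (nat \<times> nat) \<Rightarrow> (nat \<times> nat) \<Rightarrow> complex" where
  "T_BCLRS m = (\<lambda>x y z. matmult_tensor m x y z
       - (tprod (bvec (0, 0)) (bvec (0, 0)) (bvec (0, 0)) x y z
          + tprod (bvec (0, 0)) (bvec (0, 1)) (bvec (1, 0)) x y z))"

end

theory Submission
  imports Defs "Jordan_Normal_Form.Determinant"
begin

text \<open>
  The upper bound for \<open>m = 2\<close> is an explicit degeneration: five rank one tensors depending
  on \<open>\<epsilon>\<close> sum to \<open>T_BCLRS 2 + \<epsilon> E\<close>. For the lower bound, project \<open>B\<close> onto a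
  3-dimensional quotient and take the Koszul flattening \<open>\<Lambda>\<^sup>2\<complex>\<^sup>3 \<otimes> C\<^sup>* \<rightarrow> \<complex>\<^sup>3 \<otimes> A\<close>.
  A rank one tensor \<open>a \<otimes> b \<otimes> c\<close> is sent to a map of rank at most 2, since contraction
  \<open>\<Lambda>\<^sup>2\<complex>\<^sup>3 \<rightarrow> \<complex>\<^sup>3\<close> with a vector \<open>\<beta>\<close> has \<open>\<beta>\<close> in its kernel, whereas for \<open>T_BCLRS m\<close>,
  after a change of basis, the flattening contains the identity on a space of dimension
  \<open>3(2m - 1)\<close>. The determinant of that block is a polynomial in the coordinates vanishing on
  sums of \<open>r\<close> rank one tensors whenever \<open>2r < 6m - 3\<close>, hence on their limits, so the border
  rank is at least \<open>3m - 1\<close>.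
\<close>

section \<open>Coordinates of \<open>T_BCLRS\<close>\<close>

type_synonym tensor = "(nat \<times> nat) \<Rightarrow> (nat \<times> nat) \<Rightarrow> (nat \<times> nat) \<Rightarrow> complex"

lemma tprod_bvec:
  "tprod (bvec a) (bvec b) (bvec c) x y z = (if x = a \<and> y = b \<and> z = c then 1 else 0)"
  by (simp add: tprod_def bvec_def)

lemma sum_if_eq_lessThan:
  "(\<Sum>i<m. if a = i \<and> P i then c else 0) = (if a < (m::nat) \<and> P a then c else 0)"
  by (induction m) (auto simp: less_Suc_eq)

lemma T_BCLRS_apply:
  assumes "m \<ge> 1"
  shows "T_BCLRS m (i, j) y z = (if (i, j) \<in> IA m \<and> y = (j, snd y) \<and> snd y < 2 \<and> z = (snd y, i) then 1 else 0)"
proof -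
  have "matmult_tensor m (i, j) y z = (\<Sum>k<2. \<Sum>j'<2. if i < m \<and> j = j' \<and> y = (j', k) \<and> z = (k, i) then 1 else 0)"
    unfolding matmult_tensor_def tprod_bvec
    by (intro sum.cong refl) (simp add: conj_assoc sum_if_eq_lessThan)
  then show ?thesis
    using assms unfolding T_BCLRS_def tprod_bvec IA_def
    by (cases y) (auto simp: eval_nat_numeral lessThan_Suc)
qed

lemma T_BCLRS_slice:
  assumes "m \<ge> 1"
  shows "(\<lambda>y. T_BCLRS m (i, j) y (k, i')) = (if (i, j) \<in> IA m \<and> k < 2 \<and> i' = i then bvec (j, k) else (\<lambda>_. 0))"
  using assms by (auto simp: T_BCLRS_apply bvec_def fun_eq_iff)

lemma T_BCLRS_support:
  assumes "m \<ge> 1" "T_BCLRS m x y z \<noteq> 0"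
  shows "(x, y, z) \<in> IA m \<times> IB \<times> IC m"
  using assms by (cases x, cases y) (auto simp: T_BCLRS_apply IA_def IB_def IC_def split: if_splits)

section \<open>Rank and border rank\<close>

lemma tprod_eq_0:
  assumes "a = (\<lambda>_. 0) \<or> b = (\<lambda>_. 0) \<or> c = (\<lambda>_. 0)"
  shows "tprod a b c = (\<lambda>x y z. 0)"
  using assms by (auto simp: tprod_def fun_eq_iff)

lemma sum_rank_le_mono: "sum_rank_le XA XB XC r T \<Longrightarrow> r \<le> r' \<Longrightarrow> sum_rank_le XA XB XC r' T"
  unfolding sum_rank_le_def by (blast intro: le_trans)

lemma sum_rank_le_zero: "sum_rank_le XA XB XC r (\<lambda>x y z. 0)"
  unfolding sum_rank_le_def by (rule exI[of _ 0]) auto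

lemma sum_rank_le_add_tprod:
  assumes "supported_in XA a" "supported_in XB b" "supported_in XC c"
    and T: "sum_rank_le XA XB XC r T"
  shows "sum_rank_le XA XB XC (Suc r) (\<lambda>x y z. T x y z + tprod a b c x y z)"
proof (cases "a = (\<lambda>_. 0) \<or> b = (\<lambda>_. 0) \<or> c = (\<lambda>_. 0)")
  case True
  then show ?thesis using sum_rank_le_mono[OF T] by (simp add: tprod_eq_0)
next
  case False
  from T obtain k ts where "k \<le> r" and ts: "\<forall>i<k. rank_one XA XB XC (ts i)"
    and T_eq: "T = (\<lambda>x y z. \<Sum>i<k. ts i x y z)" unfolding sum_rank_le_def by blast
  have "rank_one XA XB XC (tprod a b c)" using False assms unfolding rank_one_def by blast
  then have "\<forall>i<Suc k. rank_one XA XB XC ((ts(k := tprod a b c)) i)" using ts by (simp add: less_Suc_eq)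
  moreover have "(\<lambda>x y z. T x y z + tprod a b c x y z) = (\<lambda>x y z. \<Sum>i<Suc k. (ts(k := tprod a b c)) i x y z)"
    unfolding T_eq by (auto simp: fun_eq_iff intro!: sum.cong)
  ultimately show ?thesis unfolding sum_rank_le_def using \<open>k \<le> r\<close> by (intro exI[of _ "Suc k"]) auto
qed

lemma sum_rank_le_tprod:
  "supported_in XA a \<Longrightarrow> supported_in XB b \<Longrightarrow> supported_in XC c \<Longrightarrow> sum_rank_le XA XB XC 1 (tprod a b c)"
  using sum_rank_le_add_tprod[OF _ _ _ sum_rank_le_zero, of XA a XB b XC c] by simp

lemma sum_rank_le_sum_basis:
  assumes "finite F" "F \<subseteq> XA \<times> XB \<times> XC"
  shows "sum_rank_le XA XB XC (card F)
     (\<lambda>x y z. \<Sum>(a, b, c)\<in>F. g (a, b, c) * bvec a x * bvec b y * bvec c z)"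
  using assms
proof (induction F rule: finite_induct)
  case empty
  then show ?case using sum_rank_le_zero by simp
next
  case (insert w F)
  obtain a b c where w: "w = (a, b, c)" by (cases w) auto
  have "supported_in XA (\<lambda>q. g w * bvec a q)" "supported_in XB (bvec b)" "supported_in XC (bvec c)"
    using insert.prems unfolding supported_in_def bvec_def w by auto
  from sum_rank_le_add_tprod[OF this insert.IH] insert.prems insert.hyps show ?case
    by (simp add: w tprod_def algebra_simps)
qed

lemma sum_rank_le_card:
  assumes "finite XA" "finite XB" "finite XC"
    and "\<And>x y z. T x y z \<noteq> 0 \<Longrightarrow> (x, y, z) \<in> XA \<times> XB \<times> XC"
  shows "sum_rank_le XA XB XC (card (XA \<times> XB \<times> XC)) T"
proof -
  have decomp: "(\<lambda>x y z. \<Sum>(a, b, c)\<in>XA \<times> XB \<times> XC. T a b c * bvec a x * bvec b y * bvec c z) = T"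
  proof (intro ext)
    fix x y z
    have "(\<Sum>(a, b, c)\<in>XA \<times> XB \<times> XC. T a b c * bvec a x * bvec b y * bvec c z)
        = (\<Sum>w\<in>XA \<times> XB \<times> XC. if w = (x, y, z) then T x y z else 0)"
      by (intro sum.cong refl) (auto simp: bvec_def split: if_split_asm)
    also have "\<dots> = T x y z" using assms by (auto simp: sum.delta)
    finally show "(\<Sum>(a, b, c)\<in>XA \<times> XB \<times> XC. T a b c * bvec a x * bvec b y * bvec c z) = T x y z" .
  qed
  have "sum_rank_le XA XB XC (card (XA \<times> XB \<times> XC))
      (\<lambda>x y z. \<Sum>(a, b, c)\<in>XA \<times> XB \<times> XC. T a b c * bvec a x * bvec b y * bvec c z)"
    using sum_rank_le_sum_basis[of "XA \<times> XB \<times> XC" XA XB XC "\<lambda>(a, b, c). T a b c"] assms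
    by simp
  then show ?thesis by (simp only: decomp)
qed

lemma T_BCLRS_finite_rank:
  assumes "m \<ge> 1" shows "\<exists>r. sum_rank_le (IA m) IB (IC m) r (T_BCLRS m)"
proof -
  have "IA m \<subseteq> {..<m} \<times> {..<2}" "IB \<subseteq> {..<2} \<times> {..<2}" "IC m \<subseteq> {..<2} \<times> {..<m}"
    unfolding IA_def IB_def IC_def by auto
  then have "finite (IA m)" "finite IB" "finite (IC m)" by (auto intro: finite_subset)
  with T_BCLRS_support[OF assms] show ?thesis by (blast intro: sum_rank_le_card)
qed

definition border_approx :: "'a set \<Rightarrow> 'b set \<Rightarrow> 'c set \<Rightarrow> nat \<Rightarrow> ('a \<Rightarrow> 'b \<Rightarrow> 'c \<Rightarrow> complex) \<Rightarrow> bool" where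
  "border_approx XA XB XC r T \<longleftrightarrow> (\<exists>S :: nat \<Rightarrow> ('a \<Rightarrow> 'b \<Rightarrow> 'c \<Rightarrow> complex).
      (\<forall>n. sum_rank_le XA XB XC r (S n)) \<and> (\<forall>x y z. (\<lambda>n. S n x y z) \<longlonglongrightarrow> T x y z))"

lemma border_rank_le: "border_approx XA XB XC r T \<Longrightarrow> border_rank XA XB XC T \<le> r"
  unfolding border_rank_def border_approx_def[symmetric] by (rule Least_le)

lemma border_rank_geI:
  assumes "border_approx XA XB XC r\<^sub>0 T" and "\<And>r. border_approx XA XB XC r T \<Longrightarrow> n \<le> r"
  shows "n \<le> border_rank XA XB XC T"
  unfolding border_rank_def border_approx_def[symmetric] using assms by (metis LeastI)

lemma border_approx_if_sum_rank_le: "sum_rank_le XA XB XC r T \<Longrightarrow> border_approx XA XB XC r T"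
  unfolding border_approx_def by (intro exI[of _ "\<lambda>_. T"]) auto

section \<open>The degeneration for \<open>m = 2\<close>\<close>

(* The approximate algorithm of Bini, Capovani, Lotti and Romani. *)
definition T2_approx :: "complex \<Rightarrow> tensor" where
  "T2_approx \<epsilon> = (\<lambda>x y z.
       tprod (\<lambda>q. (bvec (0,1) q + \<epsilon> * bvec (1,1) q) / \<epsilon>) (bvec (1,0))
         (\<lambda>q. bvec (0,1) q - bvec (1,1) q + \<epsilon> * bvec (0,0) q) x y z
     + tprod (\<lambda>q. bvec (0,1) q / \<epsilon>) (bvec (1,1))
         (\<lambda>q. bvec (0,1) q - bvec (1,1) q + \<epsilon> * bvec (1,0) q) x y z
     + tprod (\<lambda>q. bvec (1,0) q / \<epsilon>) (\<lambda>q. bvec (1,0) q + bvec (1,1) q + \<epsilon> * bvec (0,0) q)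
         (bvec (0,1)) x y z
     + tprod (\<lambda>q. (bvec (1,0) q - \<epsilon> * bvec (1,1) q) / \<epsilon>) (\<lambda>q. bvec (1,0) q + bvec (1,1) q - \<epsilon> * bvec (0,1) q)
         (\<lambda>q. - bvec (1,1) q) x y z
     + tprod (\<lambda>q. - (bvec (0,1) q + bvec (1,0) q) / \<epsilon>) (\<lambda>q. bvec (1,0) q + bvec (1,1) q)
         (\<lambda>q. bvec (0,1) q - bvec (1,1) q) x y z)"

definition T2_error :: tensor where
  "T2_error = (\<lambda>x y z. tprod (bvec (1,1)) (bvec (1,0)) (bvec (0,0)) x y z
                      - tprod (bvec (1,1)) (bvec (0,1)) (bvec (1,1)) x y z)"

lemma T2_approx_eq:
  assumes "\<epsilon> \<noteq> 0"
  shows "T2_approx \<epsilon> x y z = T_BCLRS 2 x y z + \<epsilon> * T2_error x y z"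
  using assms
  by (cases x, cases y, cases z)
     (auto simp: T2_approx_def T2_error_def T_BCLRS_apply IA_def tprod_def bvec_def field_simps)

lemma sum_rank_le_T2_approx: "sum_rank_le (IA 2) IB (IC 2) 5 (T2_approx \<epsilon>)"
proof -
  have "sum_rank_le (IA 2) IB (IC 2) (Suc (Suc (Suc (Suc 1)))) (T2_approx \<epsilon>)"
    unfolding T2_approx_def
    by (intro sum_rank_le_add_tprod sum_rank_le_tprod)
       (auto simp: supported_in_def IA_def IB_def IC_def bvec_def)
  then show ?thesis by (simp add: numeral_eq_Suc)
qed

lemma border_approx_T2: "border_approx (IA 2) IB (IC 2) 5 (T_BCLRS 2)"
  unfolding border_approx_def
proof (intro exI conjI allI)
  let ?\<epsilon> = "\<lambda>n. complex_of_real (inverse (Suc n))"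
  show "sum_rank_le (IA 2) IB (IC 2) 5 (T2_approx (?\<epsilon> n))" for n
    by (rule sum_rank_le_T2_approx)
  fix x y z
  have "?\<epsilon> \<longlonglongrightarrow> of_real 0" by (rule tendsto_of_real[OF LIMSEQ_inverse_real_of_nat])
  then have "(\<lambda>n. T_BCLRS 2 x y z + ?\<epsilon> n * T2_error x y z) \<longlonglongrightarrow> T_BCLRS 2 x y z + of_real 0 * T2_error x y z"
    by (intro tendsto_add tendsto_const tendsto_mult_right)
  moreover have "T2_approx (?\<epsilon> n) x y z = T_BCLRS 2 x y z + ?\<epsilon> n * T2_error x y z" for n
    by (rule T2_approx_eq, unfold of_real_eq_0_iff) simp
  ultimately show "(\<lambda>n. T2_approx (?\<epsilon> n) x y z) \<longlonglongrightarrow> T_BCLRS 2 x y z"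
    by simp
qed

section \<open>A Koszul flattening\<close>

lemma det_eq_0_if_low_rank:
  fixes F G :: "'h \<Rightarrow> nat \<Rightarrow> 'a :: comm_ring_1"
  assumes "finite H" "card H < N"
    and M: "\<And>r c. r < N \<Longrightarrow> c < N \<Longrightarrow> M r c = (\<Sum>h\<in>H. F h r * G h c)"
  shows "det (mat N N (\<lambda>(r, c). M r c)) = 0"
proof -
  let ?K = "card H"
  obtain e where e: "bij_betw e {0..<?K} H" using ex_bij_betw_nat_finite[OF \<open>finite H\<close>] by blast
  define A where "A = mat N N (\<lambda>(r, h). if h < ?K then F (e h) r else 0)"
  define B where "B = mat N N (\<lambda>(h, c). if h < ?K then G (e h) c else 0)"
  have A: "A \<in> carrier_mat N N" and B: "B \<in> carrier_mat N N" by (auto simp: A_def B_def)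
  have "mat N N (\<lambda>(r, c). M r c) = A * B"
  proof (rule eq_matI)
    fix r c assume "r < dim_row (A * B)" "c < dim_col (A * B)"
    then have "r < N" "c < N" by (auto simp: A_def B_def)
    have "(A * B) $$ (r, c) = (\<Sum>h\<in>{0..<N}. if h < ?K then F (e h) r * G (e h) c else 0)"
      using \<open>r < N\<close> \<open>c < N\<close> by (auto simp: A_def B_def scalar_prod_def intro: sum.cong)
    also have "\<dots> = (\<Sum>h\<in>{0..<?K}. F (e h) r * G (e h) c)"
      using \<open>?K < N\<close> by (intro sum.mono_neutral_cong_right) auto
    also have "\<dots> = M r c"
      using M[OF \<open>r < N\<close> \<open>c < N\<close>] sum.reindex_bij_betw[OF e, of "\<lambda>h. F h r * G h c"] by simp
    finally show "mat N N (\<lambda>(r, c). M r c) $$ (r, c) = (A * B) $$ (r, c)"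
      using \<open>r < N\<close> \<open>c < N\<close> by simp
  qed (auto simp: A_def B_def)
  moreover have "det B = 0"
  proof -
    have "(\<Prod>i = 0..<N. B $$ (i, p i)) = 0" if "p permutes {0..<N}" for p
    proof (rule prod_zero)
      have "p (N - 1) < N" using that \<open>?K < N\<close> by (auto simp: permutes_in_image)
      then show "\<exists>i\<in>{0..<N}. B $$ (i, p i) = 0"
        using \<open>?K < N\<close> by (intro bexI[of _ "N - 1"]) (auto simp: B_def)
    qed simp
    then show ?thesis using B by (simp add: det_def')
  qed
  ultimately show ?thesis using A B by (simp add: det_mult)
qed

lemma tendsto_det:
  assumes "\<And>r c. r < N \<Longrightarrow> c < N \<Longrightarrow> (\<lambda>n. f n r c) \<longlonglongrightarrow> g r c"
  shows "(\<lambda>n. det (mat N N (\<lambda>(r, c). f n r c))) \<longlonglongrightarrow> (det (mat N N (\<lambda>(r, c). g r c)) :: complex)"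
proof -
  have det_expand: "det (mat N N (\<lambda>(r, c). h r c))
      = (\<Sum>p\<in>{p. p permutes {0..<N}}. signof p * (\<Prod>i = 0..<N. h i (p i)))" for h :: "nat \<Rightarrow> nat \<Rightarrow> complex"
    by (subst det_def'[of _ N]) (auto simp: permutes_in_image intro!: sum.cong prod.cong)
  show ?thesis
    unfolding det_expand
    by (intro tendsto_sum tendsto_mult_left tendsto_prod assms)
       (auto simp: permutes_in_image)
qed

(* B = V\<^sup>* \<otimes> W enters only through its quotient by the line spanned by y01 - y10,
   with coordinates (b11, b01 + b10, b00). *)
definition bsym :: "(nat \<times> nat \<Rightarrow> complex) \<Rightarrow> nat \<Rightarrow> complex" where
  "bsym b s = (if s = 0 then b (1, 1) else if s = 1 then b (0, 1) + b (1, 0) else b (0, 0))"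

lemma bsym_tprod: "bsym (\<lambda>y. tprod a b c x y z) = (\<lambda>s. a x * c z * bsym b s)"
  by (auto simp: bsym_def tprod_def algebra_simps)

lemma bsym_sum: "bsym (\<lambda>y. \<Sum>i\<in>I. f i y) = (\<lambda>s. \<Sum>i\<in>I. bsym (f i) s)"
  by (auto simp: bsym_def sum.distrib)

lemma bsym_tendsto:
  "(\<And>y. (\<lambda>n. f n y) \<longlonglongrightarrow> g y) \<Longrightarrow> (\<lambda>n. bsym (f n) s) \<longlonglongrightarrow> bsym g s"
  unfolding bsym_def by (auto intro!: tendsto_add)

definition wedge_pair :: "nat \<Rightarrow> nat \<times> nat" where
  "wedge_pair p = (if p = 0 then (0, 1) else if p = 1 then (0, 2) else (1, 2))"

(* Row p stands for the basis vector e_a \<and> e_b of \<Lambda>\<^sup>2\<complex>\<^sup>3, where (a, b) = wedge_pair p;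
   contract \<beta> is the contraction with \<beta>. *)
definition contract :: "(nat \<Rightarrow> complex) \<Rightarrow> nat \<Rightarrow> nat \<Rightarrow> complex" where
  "contract \<beta> p q = (case wedge_pair p of (a, b) \<Rightarrow> (if q = b then \<beta> a else 0) - (if q = a then \<beta> b else 0))"

lemma contract_scale: "contract (\<lambda>s. t * \<beta> s) p q = t * contract \<beta> p q"
  by (simp add: contract_def algebra_simps split: prod.split)

lemma contract_sum: "contract (\<lambda>s. \<Sum>i\<in>I. \<beta> i s) p q = (\<Sum>i\<in>I. contract (\<beta> i) p q)"
  by (simp add: contract_def sum_subtractf split: prod.split)

lemma contract_tendsto:
  assumes "\<And>s. (\<lambda>n. \<beta> n s) \<longlonglongrightarrow> \<gamma> s"
  shows "(\<lambda>n. contract (\<beta> n) p q) \<longlonglongrightarrow> contract \<gamma> p q"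
proof -
  obtain a b where "wedge_pair p = (a, b)" by (cases "wedge_pair p")
  then show ?thesis
    unfolding contract_def by (cases "q = a"; cases "q = b") (auto intro!: tendsto_diff tendsto_minus assms)
qed

lemma contract_kernel: "(\<Sum>q<3. contract \<beta> p q * \<beta> q) = 0"
  by (auto simp: contract_def wedge_pair_def eval_nat_numeral lessThan_Suc algebra_simps)

lemma factor_through_kernel:
  fixes X :: "'r \<Rightarrow> nat \<Rightarrow> complex"
  assumes "j < n" "\<beta> j \<noteq> 0" and kernel: "(\<Sum>q<n. X p q * \<beta> q) = 0" and "q < n"
  shows "X p q = (\<Sum>h\<in>{..<n} - {j}. X p h * ((if q = h then 1 else 0) - (if q = j then \<beta> h / \<beta> j else 0)))"
proof (cases "q = j")
  case True
  have "(\<Sum>q<n. X p q * \<beta> q) = X p j * \<beta> j + (\<Sum>h\<in>{..<n} - {j}. X p h * \<beta> h)"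
    using \<open>j < n\<close> by (simp add: sum.remove)
  then have "X p j = - (\<Sum>h\<in>{..<n} - {j}. X p h * \<beta> h) / \<beta> j"
    using kernel \<open>\<beta> j \<noteq> 0\<close> by (simp add: field_simps add_eq_0_iff)
  also have "\<dots> = (\<Sum>h\<in>{..<n} - {j}. X p h * ((if q = h then 1 else 0) - (if q = j then \<beta> h / \<beta> j else 0)))"
    unfolding True by (simp add: sum_negf[symmetric] sum_divide_distrib)
  finally show ?thesis using True by simp
next
  case False
  then have "(\<Sum>h\<in>{..<n} - {j}. X p h * ((if q = h then 1 else 0) - (if q = j then \<beta> h / \<beta> j else 0)))
      = (\<Sum>h\<in>{..<n} - {j}. if q = h then X p h else 0)"
    by (intro sum.cong) auto
  with False \<open>q < n\<close> show ?thesis by (simp add: sum.delta')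
qed

lemma contract_rank_le_2:
  "\<exists>(H :: nat set) F G. finite H \<and> card H \<le> 2 \<and> (\<forall>p. \<forall>q<3. contract \<beta> p q = (\<Sum>h\<in>H. F p h * G h q))"
proof (cases "\<forall>j<3. \<beta> j = 0")
  case True
  then have "contract \<beta> p q = 0" for p q
    by (auto simp: contract_def wedge_pair_def)
  then show ?thesis by (intro exI[of _ "{}"]) auto
next
  case False
  then obtain j where "j < 3" "\<beta> j \<noteq> 0" by blast
  with factor_through_kernel[where X = "contract \<beta>", OF _ _ contract_kernel] show ?thesis
    by (intro exI[of _ "{..<3} - {j}"] exI[of _ "contract \<beta>"]
          exI[of _ "\<lambda>h q. (if q = h then 1 else 0) - (if q = j then \<beta> h / \<beta> j else 0)"]) auto
qed

(* A left inverse of the 6 \<times> 6 block (p, k), (q, j) \<mapsto> contract (bsym (bvec (j, k))) p q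
   that the Koszul flattening of T_BCLRS has at each u_i. *)
definition block_inv :: "nat \<Rightarrow> nat \<Rightarrow> nat \<Rightarrow> nat \<Rightarrow> complex" where
  "block_inv q j p k =
     (if q = 0 \<and> j = 0 then (if p = 1 \<and> k = 0 then -1 else 0)
      else if q = 0 \<and> j = 1 then (if p = 0 \<and> k = 0 then -1 else 0)
      else if q = 1 \<and> j = 0 then (if p = 1 \<and> k = 1 then 1 else if p = 2 \<and> k = 0 then -1 else 0)
      else if q = 1 \<and> j = 1 then (if p = 0 \<and> k = 1 then 1 else if p = 1 \<and> k = 0 then -1 else 0)
      else if q = 2 \<and> j = 0 then (if p = 2 \<and> k = 1 then 1 else 0)
      else if q = 2 \<and> j = 1 then (if p = 1 \<and> k = 1 then 1 else 0)
      else 0)"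

lemma block_inv_left_inverse:
  "\<forall>q'<3. \<forall>j'<2. \<forall>q<3. \<forall>j<2.
     (\<Sum>p<3. \<Sum>k<2. block_inv q' j' p k * contract (bsym (bvec (j, k))) p q)
       = (if q' = q \<and> j' = j then 1 else 0)"
  by (simp add: eval_nat_numeral All_less_Suc lessThan_Suc block_inv_def contract_def wedge_pair_def
      bsym_def bvec_def)

(* The Koszul flattening \<Lambda>\<^sup>2\<complex>\<^sup>3 \<otimes> C\<^sup>* \<rightarrow> \<complex>\<^sup>3 \<otimes> A along the quotient bsym of B,
   with block_inv applied to the rows, which are thereby indexed like \<complex>\<^sup>3 \<otimes> A. *)
definition koszul :: "tensor \<Rightarrow> nat \<times> nat \<times> nat \<Rightarrow> nat \<times> nat \<times> nat \<Rightarrow> complex" where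
  "koszul S = (\<lambda>(q', i', j') (q, a).
     \<Sum>p<3. \<Sum>k<2. block_inv q' j' p k * contract (bsym (\<lambda>y. S a y (k, i'))) p q)"

lemma koszul_T_BCLRS:
  assumes "m \<ge> 1" "q' < 3" "(i', j') \<in> IA m" "q < 3" "(i, j) \<in> IA m"
  shows "koszul (T_BCLRS m) (q', i', j') (q, i, j) = (if (q', i', j') = (q, i, j) then 1 else 0)"
proof (cases "i' = i")
  case True
  have "j' < 2" "j < 2" using assms by (auto simp: IA_def)
  then show ?thesis
    using assms True block_inv_left_inverse
    by (simp add: koszul_def T_BCLRS_slice)
next
  case False
  have "contract (bsym (\<lambda>_. 0)) p q = 0" for p q
    by (simp add: contract_def bsym_def split: prod.split)
  then show ?thesis
    using assms False by (simp add: koszul_def T_BCLRS_slice)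
qed

lemma koszul_tprod:
  assumes "\<forall>p. \<forall>q<3. contract (bsym b) p q = (\<Sum>h\<in>H. F p h * G h q)" "q < 3"
  shows "koszul (tprod a b c) (q', i', j') (q, x)
       = (\<Sum>h\<in>H. (\<Sum>p<3. \<Sum>k<2. block_inv q' j' p k * c (k, i') * F p h) * (G h q * a x))"
proof -
  have "koszul (tprod a b c) (q', i', j') (q, x)
      = (\<Sum>p<3. \<Sum>k<2. block_inv q' j' p k * (a x * c (k, i') * (\<Sum>h\<in>H. F p h * G h q)))"
    using assms by (simp add: koszul_def bsym_tprod contract_scale)
  also have "\<dots> = (\<Sum>h\<in>H. (\<Sum>p<3. \<Sum>k<2. block_inv q' j' p k * c (k, i') * F p h) * (G h q * a x))"
    by (simp add: sum_distrib_left sum_distrib_right sum.swap[of _ H] algebra_simps)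
  finally show ?thesis .
qed

lemma koszul_sum: "koszul (\<lambda>x y z. \<Sum>i<k. ts i x y z) r c = (\<Sum>i<k. koszul (ts i) r c)"
  by (simp add: koszul_def bsym_sum contract_sum sum_distrib_left sum.swap[of _ "{..<k}"] split: prod.split)

lemma koszul_tendsto:
  assumes "\<And>x y z. (\<lambda>n. S n x y z) \<longlonglongrightarrow> T x y z"
  shows "(\<lambda>n. koszul (S n) r c) \<longlonglongrightarrow> koszul T r c"
  unfolding koszul_def
  by (auto intro!: tendsto_sum tendsto_mult_left contract_tendsto bsym_tendsto assms split: prod.split)

(* Enumerates {..<3} \<times> IA m, which has 3 (2m - 1) = 6m - 3 elements. *)
definition idx :: "nat \<Rightarrow> nat \<times> nat \<times> nat" where
  "idx r = (r mod 3, (r div 3 + 1) div 2, (r div 3 + 1) mod 2)"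

lemma idx_mem:
  assumes "r < 6 * m - 3"
  shows "fst (idx r) < 3" "snd (idx r) \<in> IA m"
proof -
  have "r div 3 + 1 < 2 * m" using assms by linarith
  then have "(r div 3 + 1) div 2 < m" by (simp add: less_mult_imp_div_less mult.commute)
  moreover have "(r div 3 + 1) mod 2 < 2" by simp
  moreover have "(r div 3 + 1) div 2 \<noteq> 0 \<or> (r div 3 + 1) mod 2 \<noteq> 0" by presburger
  ultimately show "fst (idx r) < 3" "snd (idx r) \<in> IA m" by (auto simp: idx_def IA_def)
qed

lemma idx_inj:
  assumes "idx r = idx r'" shows "r = r'"
proof -
  have "(r div 3 + 1) div 2 = (r' div 3 + 1) div 2" "(r div 3 + 1) mod 2 = (r' div 3 + 1) mod 2"
    "r mod 3 = r' mod 3"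
    using assms by (simp_all add: idx_def)
  then show ?thesis by (metis div_mult_mod_eq add_right_cancel)
qed

definition koszul_det :: "nat \<Rightarrow> tensor \<Rightarrow> complex" where
  "koszul_det m S = det (mat (6 * m - 3) (6 * m - 3) (\<lambda>(r, c). koszul S (idx r) (idx c)))"

lemma koszul_det_T_BCLRS:
  assumes "m \<ge> 1" shows "koszul_det m (T_BCLRS m) = 1"
proof -
  have "koszul (T_BCLRS m) (idx r) (idx c) = (if r = c then 1 else 0)"
    if "r < 6 * m - 3" "c < 6 * m - 3" for r c
    using koszul_T_BCLRS[OF assms] idx_mem[OF that(1)] idx_mem[OF that(2)] idx_inj[of r c]
    by (cases "idx r", cases "idx c") auto
  then have "mat (6 * m - 3) (6 * m - 3) (\<lambda>(r, c). koszul (T_BCLRS m) (idx r) (idx c)) = 1\<^sub>m (6 * m - 3)"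
    by (intro eq_matI) auto
  then show ?thesis by (simp add: koszul_det_def)
qed

lemma koszul_rank_le:
  assumes "sum_rank_le XA XB XC r S"
  shows "\<exists>(H :: (nat \<times> nat) set) F G. finite H \<and> card H \<le> 2 * r \<and>
    (\<forall>row q x. q < 3 \<longrightarrow> koszul S row (q, x) = (\<Sum>h\<in>H. F h row * G h (q, x)))"
proof -
  obtain k ts where "k \<le> r" "\<forall>i<k. rank_one XA XB XC (ts i)"
    and S: "S = (\<lambda>x y z. \<Sum>i<k. ts i x y z)"
    using assms unfolding sum_rank_le_def by blast
  then have "\<forall>i<k. \<exists>a b c. ts i = tprod a b c" unfolding rank_one_def by blast
  then obtain a b c where tprods: "\<And>i. i < k \<Longrightarrow> ts i = tprod (a i) (b i) (c i)"
    by metis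
  have "\<forall>i. \<exists>(H :: nat set) F G. finite H \<and> card H \<le> 2 \<and>
      (\<forall>p. \<forall>q<3. contract (bsym (b i)) p q = (\<Sum>h\<in>H. F p h * G h q))"
    by (intro allI contract_rank_le_2)
  then obtain H :: "nat \<Rightarrow> nat set" and F G where "\<forall>i. finite (H i) \<and> card (H i) \<le> 2 \<and>
      (\<forall>p. \<forall>q<3. contract (bsym (b i)) p q = (\<Sum>h\<in>H i. F i p h * G i h q))"
    unfolding choice_iff by blast
  then have H: "\<And>i. finite (H i)" "\<And>i. card (H i) \<le> 2"
    and factor: "\<And>i. \<forall>p. \<forall>q<3. contract (bsym (b i)) p q = (\<Sum>h\<in>H i. F i p h * G i h q)"
    by blast+
  let ?H = "SIGMA i:{..<k}. H i"
  let ?F = "\<lambda>(i, h) (q', i', j'). \<Sum>p<3. \<Sum>k<2. block_inv q' j' p k * c i (k, i') * F i p h"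
  let ?G = "\<lambda>(i, h) (q, x). G i h q * a i x"
  have "card ?H \<le> 2 * r"
    using H sum_bounded_above[of "{..<k}" "\<lambda>i. card (H i)" 2] \<open>k \<le> r\<close> by simp
  moreover have "koszul S (q', i', j') (q, x) = (\<Sum>ih\<in>?H. ?F ih (q', i', j') * ?G ih (q, x))"
    if "q < 3" for q' i' j' q x
  proof -
    have "koszul S (q', i', j') (q, x) = (\<Sum>i<k. koszul (tprod (a i) (b i) (c i)) (q', i', j') (q, x))"
      unfolding S koszul_sum using tprods by (intro sum.cong) auto
    also have "\<dots> = (\<Sum>i<k. \<Sum>h\<in>H i. ?F (i, h) (q', i', j') * ?G (i, h) (q, x))"
      using koszul_tprod[OF factor \<open>q < 3\<close>] by simp
    also have "\<dots> = (\<Sum>ih\<in>?H. ?F ih (q', i', j') * ?G ih (q, x))"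
      using H by (simp add: sum.Sigma split_def)
    finally show ?thesis .
  qed
  ultimately show ?thesis using H by (intro exI[of _ ?H] exI[of _ ?F] exI[of _ ?G]) auto
qed

lemma koszul_det_eq_0:
  assumes "sum_rank_le XA XB XC r S" "2 * r < 6 * m - 3"
  shows "koszul_det m S = 0"
proof -
  obtain H :: "(nat \<times> nat) set" and F G where "finite H" "card H \<le> 2 * r"
    and factor: "\<And>row q x. q < 3 \<Longrightarrow> koszul S row (q, x) = (\<Sum>h\<in>H. F h row * G h (q, x))"
    using koszul_rank_le[OF assms(1)] by blast
  have "koszul S (idx r') (idx c') = (\<Sum>h\<in>H. F h (idx r') * G h (idx c'))" if "c' < 6 * m - 3" for r' c'
    using factor[of "fst (idx c')"] idx_mem[OF that] by (cases "idx c'") auto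
  then show ?thesis
    unfolding koszul_det_def using \<open>finite H\<close> \<open>card H \<le> 2 * r\<close> assms(2)
    by (intro det_eq_0_if_low_rank[of H]) auto
qed

lemma koszul_det_tendsto:
  assumes "\<And>x y z. (\<lambda>n. S n x y z) \<longlonglongrightarrow> T x y z"
  shows "(\<lambda>n. koszul_det m (S n)) \<longlonglongrightarrow> koszul_det m T"
  unfolding koszul_det_def by (intro tendsto_det koszul_tendsto assms)

lemma border_approx_T_BCLRS_ge:
  assumes "m \<ge> 1" "border_approx XA XB XC r (T_BCLRS m)"
  shows "3 * m - 1 \<le> r"
proof (rule ccontr)
  assume "\<not> 3 * m - 1 \<le> r"
  then have "2 * r < 6 * m - 3" by linarith
  obtain S where "\<And>n. sum_rank_le XA XB XC r (S n)" and lim: "\<And>x y z. (\<lambda>n. S n x y z) \<longlonglongrightarrow> T_BCLRS m x y z"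
    using assms(2) unfolding border_approx_def by blast
  then have "\<And>n. koszul_det m (S n) = 0" using koszul_det_eq_0 \<open>2 * r < 6 * m - 3\<close> by blast
  moreover have "(\<lambda>n. koszul_det m (S n)) \<longlonglongrightarrow> koszul_det m (T_BCLRS m)"
    using lim by (rule koszul_det_tendsto)
  ultimately have "(\<lambda>n. 0) \<longlonglongrightarrow> (1 :: complex)" by (simp add: koszul_det_T_BCLRS[OF assms(1)])
  then show False by (simp add: LIMSEQ_const_iff)
qed

theorem mainTheorem1:
  shows "border_rank (IA 2) IB (IC 2) (T_BCLRS 2) = 5 \<and>
         (\<forall>m::nat. m > 2 \<longrightarrow> border_rank (IA m) IB (IC m) (T_BCLRS m) \<ge> 3 * m - 2)"
proof (intro conjI allI impI)
  have "5 \<le> border_rank (IA 2) IB (IC 2) (T_BCLRS 2)"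
    using border_approx_T_BCLRS_ge[of 2] by (intro border_rank_geI[OF border_approx_T2]) auto
  with border_rank_le[OF border_approx_T2] show "border_rank (IA 2) IB (IC 2) (T_BCLRS 2) = 5"
    by simp
next
  fix m :: nat assume "m > 2"
  then have "m \<ge> 1" by simp
  then obtain r where "sum_rank_le (IA m) IB (IC m) r (T_BCLRS m)"
    using T_BCLRS_finite_rank by blast
  then have "3 * m - 1 \<le> border_rank (IA m) IB (IC m) (T_BCLRS m)"
    using border_approx_T_BCLRS_ge[OF \<open>m \<ge> 1\<close>]
    by (intro border_rank_geI[OF border_approx_if_sum_rank_le])
  then show "3 * m - 2 \<le> border_rank (IA m) IB (IC m) (T_BCLRS m)" by simp
qed

end
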